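(* Let $X_t$ and $Y_t$ be two independent real-valued Lévy processes and assume $X_t$ has the local coupling property. Then the Lévy process $X_t+Y_t$ has the local coupling property.
   Context: A real-valued Lévy process is regarded as a Markov process on $\mathbb{R}$. The local coupling property: for every $x\in\mathbb{R}$ and $\epsilon>0$ there exists $\delta>0$ such that for every $y$ with $|y-x|<\delta$ there is a coupling $(X_t,Y_t)$ of the laws of the process started at $x$ and at $y$, such that $T=\inf\{t\ge0:X_t=Y_t\}$ satisfies $P(T>\epsilon)<\epsilon$. *)

theory Defs
  imports "HOL-Probability.Probability"
begin

text \<open>Real-valued stochastic processes are functions  real => 'a => real  on a
  probability space; only times t >= 0 are relevant.\<close>

definition cadlag :: "(real \<Rightarrow> real) \<Rightarrow> bool" where
  "cadlag f \<longleftrightarrow>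
     (\<forall>t\<ge>0. continuous (at_right t) f) \<and>
     (\<forall>t>0. \<exists>l. (f \<longlongrightarrow> l) (at_left t))"

definition levy_process :: "'a measure \<Rightarrow> (real \<Rightarrow> 'a \<Rightarrow> real) \<Rightarrow> bool" where
  "levy_process M X \<longleftrightarrow>
     prob_space M \<and>
     (\<forall>t\<ge>0. X t \<in> borel_measurable M) \<and>
     (AE \<omega> in M. X 0 \<omega> = 0) \<and>
     \<comment> \<open>independent increments\<close>
     (\<forall>(n::nat) (s::nat \<Rightarrow> real). 0 \<le> s 0 \<and> (\<forall>i<n. s i < s (Suc i)) \<longrightarrow>
        prob_space.indep_vars M (\<lambda>_. borel)
          (\<lambda>i \<omega>. X (s (Suc i)) \<omega> - X (s i) \<omega>) {..<n}) \<and>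
     \<comment> \<open>stationary increments\<close>
     (\<forall>s t. 0 \<le> s \<and> s \<le> t \<longrightarrow>
        distr M borel (\<lambda>\<omega>. X t \<omega> - X s \<omega>) = distr M borel (X (t - s))) \<and>
     \<comment> \<open>stochastic continuity\<close>
     (\<forall>e>0. ((\<lambda>t. measure M {\<omega>\<in>space M. \<bar>X t \<omega>\<bar> > e}) \<longlongrightarrow> 0) (at_right 0)) \<and>
     \<comment> \<open>cadlag paths (almost surely)\<close>
     (AE \<omega> in M. cadlag (\<lambda>t. X t \<omega>))"

definition same_law ::
  "'b measure \<Rightarrow> (real \<Rightarrow> 'b \<Rightarrow> real) \<Rightarrow> 'a measure \<Rightarrow> (real \<Rightarrow> 'a \<Rightarrow> real) \<Rightarrow> bool" where
  "same_law N Z M W \<longleftrightarrow>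
     (\<forall>t\<ge>0. Z t \<in> borel_measurable N) \<and> (\<forall>t\<ge>0. W t \<in> borel_measurable M) \<and>
     (\<forall>J. finite J \<and> J \<subseteq> {0..} \<longrightarrow>
        distr N (PiM J (\<lambda>_. borel)) (\<lambda>\<omega>. \<lambda>t\<in>J. Z t \<omega>) =
        distr M (PiM J (\<lambda>_. borel)) (\<lambda>\<omega>. \<lambda>t\<in>J. W t \<omega>))"

text \<open>Coupling time T = inf {t >= 0. Xc t = Yc t} (infimum of the empty set is \<infinity>).\<close>
definition coupling_time :: "(real \<Rightarrow> 'b \<Rightarrow> real) \<Rightarrow> (real \<Rightarrow> 'b \<Rightarrow> real) \<Rightarrow> 'b \<Rightarrow> ereal" where
  "coupling_time Xc Yc \<omega> = Inf {ereal t | t. t \<ge> 0 \<and> Xc t \<omega> = Yc t \<omega>}"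

text \<open>The coupling lives on a probability space whose sample space is the
  type of pairs of paths (with an arbitrary sigma-algebra), which is general enough to
  carry the push-forward of any coupling.  The coupled processes have (a.s.) cadlag paths,
  as they are distributed on path space like the Levy process.\<close>
definition good_coupling_exists ::
  "'a measure \<Rightarrow> (real \<Rightarrow> 'a \<Rightarrow> real) \<Rightarrow> real \<Rightarrow> real \<Rightarrow> real \<Rightarrow> bool" where
  "good_coupling_exists M L x y e \<longleftrightarrow>
     (\<exists>(N :: ((real \<Rightarrow> real) \<times> (real \<Rightarrow> real)) measure) Xc Yc.
        prob_space N \<and>
        same_law N Xc M (\<lambda>t \<omega>. x + L t \<omega>) \<and>
        same_law N Yc M (\<lambda>t \<omega>. y + L t \<omega>) \<and>
        (AE \<omega> in N. cadlag (\<lambda>t. Xc t \<omega>) \<and> cadlag (\<lambda>t. Yc t \<omega>)) \<and>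
        {\<omega>\<in>space N. coupling_time Xc Yc \<omega> > ereal e} \<in> sets N \<and>
        measure N {\<omega>\<in>space N. coupling_time Xc Yc \<omega> > ereal e} < e)"

definition local_coupling_property :: "'a measure \<Rightarrow> (real \<Rightarrow> 'a \<Rightarrow> real) \<Rightarrow> bool" where
  "local_coupling_property M L \<longleftrightarrow>
     (\<forall>x e. e > 0 \<longrightarrow>
        (\<exists>\<delta>>0. \<forall>y. \<bar>y - x\<bar> < \<delta> \<longrightarrow> good_coupling_exists M L x y e))"

definition path_of :: "(real \<Rightarrow> 'a \<Rightarrow> real) \<Rightarrow> 'a \<Rightarrow> real \<Rightarrow> real" where
  "path_of X \<omega> = (\<lambda>t\<in>{0..}. X t \<omega>)"

end

theory Submission
  imports Defs
begin

text \<open>Run a coupling (Xc, Yc) of the process X started at x and at y on one factor of a product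
  space and an independent copy of Y on the other, and add Y to both coupled processes. By
  independence, Xc + Y and Yc + Y are distributed as X + Y started at x and at y, and adding the
  same path to both coupled processes does not change their coupling time. The coupling is then
  transported to the type of pairs of paths, using the finest sigma-algebra making the transport
  map measurable; completing the product first keeps the cadlag property almost sure there.\<close>

lemma cadlag_add: "cadlag f \<Longrightarrow> cadlag g \<Longrightarrow> cadlag (\<lambda>t. f t + g t)"
  unfolding cadlag_def by (metis continuous_add tendsto_add)

definition final_algebra :: "'a measure \<Rightarrow> ('a \<Rightarrow> 'b) \<Rightarrow> 'b measure" where
  "final_algebra C f = sigma UNIV {A. f -` A \<inter> space C \<in> sets C}"

lemma space_final_algebra [simp]: "space (final_algebra C f) = UNIV"
  unfolding final_algebra_def by (simp add: space_measure_of_conv)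

lemma sets_final_algebraI: "f -` A \<inter> space C \<in> sets C \<Longrightarrow> A \<in> sets (final_algebra C f)"
  unfolding final_algebra_def by (auto intro: sigma_sets.Basic)

lemma measurable_final_algebra: "f \<in> C \<rightarrow>\<^sub>M final_algebra C f"
  unfolding final_algebra_def by (rule measurable_measure_of) auto

lemma measurable_from_final_algebra:
  fixes g :: "'b \<Rightarrow> 'c::topological_space"
  assumes "(\<lambda>q. g (f q)) \<in> borel_measurable C"
  shows "g \<in> borel_measurable (final_algebra C f)"
proof (rule measurableI)
  fix A :: "'c set" assume "A \<in> sets borel"
  then have "(\<lambda>q. g (f q)) -` A \<inter> space C \<in> sets C"
    by (rule measurable_sets[OF assms])
  then show "g -` A \<inter> space (final_algebra C f) \<in> sets (final_algebra C f)"
    by (auto intro: sets_final_algebraI simp: vimage_def)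
qed simp

lemma AE_distr_final_algebra:
  assumes "complete_measure C" and "AE q in C. P (f q)"
  shows "AE p in distr C (final_algebra C f) f. P p"
proof -
  have null: "f -` {p. \<not> P p} \<inter> space C \<in> null_sets C"
    using assms complete_measure.AE_iff_null_sets[OF assms(1)]
    by (auto simp: vimage_def Int_def conj_commute)
  then have "{p. \<not> P p} \<in> sets (final_algebra C f)"
    by (rule sets_final_algebraI[OF null_setsD2])
  with null have "{p. \<not> P p} \<in> null_sets (distr C (final_algebra C f) f)"
    by (simp add: null_sets_def emeasure_distr[OF measurable_final_algebra])
  then show ?thesis
    by (rule AE_I') auto
qed

lemma same_law_completion:
  assumes law: "same_law N Z M W"
  shows "same_law (completion N) Z M W"
  unfolding same_law_def
proof (intro conjI allI impI)
  fix J :: "real set" assume J: "finite J \<and> J \<subseteq> {0..}"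
  have "(\<lambda>\<omega>. \<lambda>t\<in>J. Z t \<omega>) \<in> N \<rightarrow>\<^sub>M PiM J (\<lambda>_. borel)"
    using law J unfolding same_law_def by (auto intro!: measurable_restrict)
  with law J show "distr (completion N) (PiM J (\<lambda>_. borel)) (\<lambda>\<omega>. \<lambda>t\<in>J. Z t \<omega>)
      = distr M (PiM J (\<lambda>_. borel)) (\<lambda>\<omega>. \<lambda>t\<in>J. W t \<omega>)"
    unfolding same_law_def by (simp add: distr_completion)
qed (use law in \<open>auto simp: same_law_def intro: measurable_completion\<close>)

lemma same_law_distr:
  assumes f: "f \<in> C \<rightarrow>\<^sub>M S" and prj: "\<forall>t\<ge>0. prj t \<in> borel_measurable S"
    and law: "same_law C (\<lambda>t q. prj t (f q)) M W"
  shows "same_law (distr C S f) prj M W"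
  unfolding same_law_def
proof (intro conjI allI impI)
  fix J :: "real set" assume J: "finite J \<and> J \<subseteq> {0..}"
  have "(\<lambda>p. \<lambda>t\<in>J. prj t p) \<in> S \<rightarrow>\<^sub>M PiM J (\<lambda>_. borel)"
    using J prj by (auto intro!: measurable_restrict)
  then have "distr (distr C S f) (PiM J (\<lambda>_. borel)) (\<lambda>p. \<lambda>t\<in>J. prj t p)
      = distr C (PiM J (\<lambda>_. borel)) (\<lambda>q. \<lambda>t\<in>J. prj t (f q))"
    using distr_distr[OF _ f] by (simp add: comp_def)
  with J law show "distr (distr C S f) (PiM J (\<lambda>_. borel)) (\<lambda>p. \<lambda>t\<in>J. prj t p)
      = distr M (PiM J (\<lambda>_. borel)) (\<lambda>\<omega>. \<lambda>t\<in>J. W t \<omega>)"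
    unfolding same_law_def by simp
qed (use prj law in \<open>auto simp: same_law_def\<close>)

lemma indep_var_path_of_add_const:
  assumes "prob_space M"
    and "prob_space.indep_var M (PiM {0..} (\<lambda>_. borel)) (path_of X) (PiM {0..} (\<lambda>_. borel)) (path_of Y)"
  shows "prob_space.indep_var M (PiM {0..} (\<lambda>_. borel)) (path_of (\<lambda>t \<omega>. c + X t \<omega>))
                               (PiM {0..} (\<lambda>_. borel)) (path_of Y)"
proof -
  interpret prob_space M by fact
  define shift where "shift = (\<lambda>p::real \<Rightarrow> real. \<lambda>t\<in>{0::real..}. c + p t)"
  have "shift \<in> PiM {0..} (\<lambda>_. borel) \<rightarrow>\<^sub>M PiM {0..} (\<lambda>_. borel)"
    unfolding shift_def by (auto intro!: measurable_restrict)
  moreover have "path_of (\<lambda>t \<omega>. c + X t \<omega>) = shift \<circ> path_of X"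
    by (auto simp: fun_eq_iff shift_def path_of_def)
  ultimately show ?thesis
    using indep_var_compose[OF assms(2) _ measurable_ident] by simp
qed

lemma same_law_add_independent:
  fixes M :: "'a measure" and N :: "'b measure"
  assumes M: "prob_space M" and N: "prob_space N"
    and law: "same_law N Z M X"
    and Ym: "\<forall>t\<ge>0. Y t \<in> borel_measurable M"
    and indep: "prob_space.indep_var M (PiM {0..} (\<lambda>_. borel)) (path_of X)
                                     (PiM {0..} (\<lambda>_. borel)) (path_of Y)"
  shows "same_law (N \<Otimes>\<^sub>M M) (\<lambda>t q. Z t (fst q) + Y t (snd q)) M (\<lambda>t \<omega>. X t \<omega> + Y t \<omega>)"
  unfolding same_law_def
proof (intro conjI allI impI)
  fix t :: real assume "t \<ge> 0"
  with law Ym have "Z t \<in> borel_measurable N" "Y t \<in> borel_measurable M"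
    by (auto simp: same_law_def)
  then show "(\<lambda>q. Z t (fst q) + Y t (snd q)) \<in> borel_measurable (N \<Otimes>\<^sub>M M)"
    by measurable
next
  fix t :: real assume "t \<ge> 0"
  with law Ym have "X t \<in> borel_measurable M" "Y t \<in> borel_measurable M"
    by (auto simp: same_law_def)
  then show "(\<lambda>\<omega>. X t \<omega> + Y t \<omega>) \<in> borel_measurable M"
    by measurable
next
  interpret M: prob_space M by fact
  interpret N: prob_space N by fact
  fix J :: "real set" assume J: "finite J \<and> J \<subseteq> {0..}"
  define K where "K = PiM J (\<lambda>_. borel :: real measure)"
  define add where "add = (\<lambda>p::(real \<Rightarrow> real) \<times> (real \<Rightarrow> real). \<lambda>t\<in>J. fst p t + snd p t)"
  define ZJ where "ZJ = (\<lambda>\<omega>. \<lambda>t\<in>J. Z t \<omega>)"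
  define XJ where "XJ = (\<lambda>\<omega>. \<lambda>t\<in>J. X t \<omega>)"
  define YJ where "YJ = (\<lambda>\<omega>. \<lambda>t\<in>J. Y t \<omega>)"
  have add: "add \<in> K \<Otimes>\<^sub>M K \<rightarrow>\<^sub>M K"
    unfolding add_def K_def by (rule measurable_restrict) measurable
  have ZJ: "ZJ \<in> N \<rightarrow>\<^sub>M K"
    using law J unfolding ZJ_def K_def same_law_def by (auto intro!: measurable_restrict)
  have YJ: "YJ \<in> M \<rightarrow>\<^sub>M K"
    using Ym J unfolding YJ_def K_def by (auto intro!: measurable_restrict)
  have lawJ: "distr N K ZJ = distr M K XJ"
    using law J unfolding same_law_def ZJ_def XJ_def K_def by auto
  have restrict: "(\<lambda>p. \<lambda>t\<in>J. p t) \<in> PiM {0..} (\<lambda>_. borel) \<rightarrow>\<^sub>M K"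
    using J unfolding K_def by (auto intro!: measurable_restrict)
  have "M.indep_var K XJ K YJ"
    using M.indep_var_compose[OF indep restrict restrict] J
    by (simp add: comp_def XJ_def YJ_def path_of_def subset_eq cong: restrict_cong)
  then have XJ: "XJ \<in> M \<rightarrow>\<^sub>M K"
    and indepJ: "distr M K XJ \<Otimes>\<^sub>M distr M K YJ = distr M (K \<Otimes>\<^sub>M K) (\<lambda>\<omega>. (XJ \<omega>, YJ \<omega>))"
    using M.indep_var_rv1 M.indep_var_distribution_eq by blast+
  have sf: "sigma_finite_measure (distr M K YJ)"
    using M.prob_space_distr[OF YJ] prob_space_imp_sigma_finite by blast
  have "distr (N \<Otimes>\<^sub>M M) K (\<lambda>q. \<lambda>t\<in>J. Z t (fst q) + Y t (snd q))
      = distr (N \<Otimes>\<^sub>M M) K (add \<circ> (\<lambda>(x, y). (ZJ x, YJ y)))"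
    by (rule distr_cong) (auto simp: add_def ZJ_def YJ_def split_beta)
  also have "\<dots> = distr (distr (N \<Otimes>\<^sub>M M) (K \<Otimes>\<^sub>M K) ((\<lambda>(x, y). (ZJ x, YJ y)))) K add"
    by (rule distr_distr[symmetric, OF add]) (use ZJ YJ in measurable)
  also have "\<dots> = distr (distr N K ZJ \<Otimes>\<^sub>M distr M K YJ) K add"
    using pair_measure_distr[OF ZJ YJ sf] by simp
  also have "\<dots> = distr (distr M (K \<Otimes>\<^sub>M K) (\<lambda>\<omega>. (XJ \<omega>, YJ \<omega>))) K add"
    by (simp only: lawJ indepJ)
  also have "\<dots> = distr M K (add \<circ> (\<lambda>\<omega>. (XJ \<omega>, YJ \<omega>)))"
    by (rule distr_distr[OF add]) (use XJ YJ in measurable)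
  also have "\<dots> = distr M K (\<lambda>\<omega>. \<lambda>t\<in>J. X t \<omega> + Y t \<omega>)"
    by (rule distr_cong) (auto simp: add_def XJ_def YJ_def)
  finally show "distr (N \<Otimes>\<^sub>M M) (PiM J (\<lambda>_. borel)) (\<lambda>q. \<lambda>t\<in>J. Z t (fst q) + Y t (snd q))
      = distr M (PiM J (\<lambda>_. borel)) (\<lambda>\<omega>. \<lambda>t\<in>J. X t \<omega> + Y t \<omega>)"
    unfolding K_def .
qed

lemma same_law_transport_add_independent:
  fixes M :: "'a measure" and N :: "'b measure"
    and sel :: "'c \<Rightarrow> real \<Rightarrow> real" and f :: "'b \<times> 'a \<Rightarrow> 'c"
  assumes M: "prob_space M" and N: "prob_space N"
    and Ym: "\<forall>t\<ge>0. Y t \<in> borel_measurable M"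
    and indep: "prob_space.indep_var M (PiM {0..} (\<lambda>_. borel)) (path_of X)
                                     (PiM {0..} (\<lambda>_. borel)) (path_of Y)"
    and law: "same_law N Z M (\<lambda>t \<omega>. c + X t \<omega>)"
    and sel_f: "\<And>q. sel (f q) = (\<lambda>t. Z t (fst q) + Y t (snd q))"
  defines "C \<equiv> completion (N \<Otimes>\<^sub>M M)"
  shows "same_law (distr C (final_algebra C f) f) (\<lambda>t p. sel p t) M (\<lambda>t \<omega>. c + (X t \<omega> + Y t \<omega>))"
proof -
  have "same_law C (\<lambda>t q. Z t (fst q) + Y t (snd q)) M (\<lambda>t \<omega>. c + X t \<omega> + Y t \<omega>)"
    unfolding C_def using same_law_add_independent[OF M N law Ym indep_var_path_of_add_const[OF M indep]]
    by (rule same_law_completion)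
  then have law_C: "same_law C (\<lambda>t q. sel (f q) t) M (\<lambda>t \<omega>. c + (X t \<omega> + Y t \<omega>))"
    by (simp add: sel_f add.assoc)
  then have "\<forall>t\<ge>0. (\<lambda>p. sel p t) \<in> borel_measurable (final_algebra C f)"
    unfolding same_law_def by (auto intro: measurable_from_final_algebra)
  with law_C show ?thesis
    by (intro same_law_distr measurable_final_algebra)
qed

lemma AE_pair_measure_fst_snd:
  assumes M: "sigma_finite_measure M" and P: "AE x in N. P x" and Q: "AE y in M. Q y"
  shows "AE q in N \<Otimes>\<^sub>M M. P (fst q) \<and> Q (snd q)"
proof -
  interpret M: sigma_finite_measure M by fact
  obtain B1 where B1: "{x\<in>space N. \<not> P x} \<subseteq> B1" "B1 \<in> null_sets N"
    using P unfolding eventually_ae_filter by blast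
  obtain B2 where B2: "{y\<in>space M. \<not> Q y} \<subseteq> B2" "B2 \<in> null_sets M"
    using Q unfolding eventually_ae_filter by blast
  have "B1 \<times> space M \<union> space N \<times> B2 \<in> null_sets (N \<Otimes>\<^sub>M M)"
    using B1(2) B2(2) by (intro null_sets.Un M.times_in_null_sets1 M.times_in_null_sets2) auto
  then show ?thesis
    by (rule AE_I') (use B1(1) B2(1) in \<open>auto simp: space_pair_measure\<close>)
qed

lemma measure_pair_measure_Times_space:
  assumes "prob_space M" and "A \<in> sets N"
  shows "measure (N \<Otimes>\<^sub>M M) (A \<times> space M) = measure N A"
proof -
  interpret M: prob_space M by fact
  show ?thesis
    using assms(2) by (simp add: measure_def M.emeasure_pair_measure_Times M.emeasure_space_1)
qed

lemma good_coupling_existsI: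
  fixes N :: "((real \<Rightarrow> real) \<times> (real \<Rightarrow> real)) measure"
  assumes "prob_space N"
    and "same_law N Xc M (\<lambda>t \<omega>. x + L t \<omega>)" and "same_law N Yc M (\<lambda>t \<omega>. y + L t \<omega>)"
    and "AE \<omega> in N. cadlag (\<lambda>t. Xc t \<omega>) \<and> cadlag (\<lambda>t. Yc t \<omega>)"
    and "{\<omega>\<in>space N. coupling_time Xc Yc \<omega> > ereal e} \<in> sets N"
    and "measure N {\<omega>\<in>space N. coupling_time Xc Yc \<omega> > ereal e} < e"
  shows "good_coupling_exists M L x y e"
  unfolding good_coupling_exists_def using assms by blast

lemma good_coupling_exists_add_independent:
  assumes M: "prob_space M"
    and Ym: "\<forall>t\<ge>0. Y t \<in> borel_measurable M"
    and Y_cadlag: "AE \<omega> in M. cadlag (\<lambda>t. Y t \<omega>)"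
    and indep: "prob_space.indep_var M (PiM {0..} (\<lambda>_. borel)) (path_of X)
                                     (PiM {0..} (\<lambda>_. borel)) (path_of Y)"
    and coupling: "good_coupling_exists M X x y e"
  shows "good_coupling_exists M (\<lambda>t \<omega>. X t \<omega> + Y t \<omega>) x y e"
proof -
  interpret M: prob_space M by fact
  obtain N1 :: "((real \<Rightarrow> real) \<times> (real \<Rightarrow> real)) measure" and Xc Yc where
    N1: "prob_space N1"
    and law_Xc: "same_law N1 Xc M (\<lambda>t \<omega>. x + X t \<omega>)"
    and law_Yc: "same_law N1 Yc M (\<lambda>t \<omega>. y + X t \<omega>)"
    and cadlag_c: "AE \<omega> in N1. cadlag (\<lambda>t. Xc t \<omega>) \<and> cadlag (\<lambda>t. Yc t \<omega>)"
    and E1: "{\<omega>\<in>space N1. coupling_time Xc Yc \<omega> > ereal e} \<in> sets N1"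
    and P_E1: "measure N1 {\<omega>\<in>space N1. coupling_time Xc Yc \<omega> > ereal e} < e"
    using coupling unfolding good_coupling_exists_def by blast
  interpret N1: prob_space N1 by fact
  interpret P: pair_prob_space N1 M ..
  define C where "C = completion (N1 \<Otimes>\<^sub>M M)"
  define f where "f = (\<lambda>q. (\<lambda>t. Xc t (fst q) + Y t (snd q), \<lambda>t. Yc t (fst q) + Y t (snd q)))"
  define N where "N = distr C (final_algebra C f) f"
  have N: "prob_space N"
    unfolding N_def C_def by (intro prob_space.prob_space_distr P.prob_space_completion)
      (simp add: C_def[symmetric] measurable_final_algebra)
  have cadlag_N: "AE p in N. cadlag (\<lambda>t. fst p t) \<and> cadlag (\<lambda>t. snd p t)"
  proof -
    have "AE q in N1 \<Otimes>\<^sub>M M. (cadlag (\<lambda>t. Xc t (fst q)) \<and> cadlag (\<lambda>t. Yc t (fst q)))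
                              \<and> cadlag (\<lambda>t. Y t (snd q))"
      using AE_pair_measure_fst_snd[OF M.sigma_finite_measure_axioms cadlag_c Y_cadlag] .
    then have "AE q in C. cadlag (\<lambda>t. fst (f q) t) \<and> cadlag (\<lambda>t. snd (f q) t)"
      unfolding C_def f_def by (auto intro: AE_completion elim!: AE_mp simp: cadlag_add)
    then show ?thesis
      unfolding N_def C_def by (rule AE_distr_final_algebra[OF completion.complete_measure_axioms])
  qed
  define E1 where "E1 = {\<omega>\<in>space N1. coupling_time Xc Yc \<omega> > ereal e}"
  define E where "E = {p\<in>space N. coupling_time (\<lambda>t p. fst p t) (\<lambda>t p. snd p t) p > ereal e}"
  have E1_sets: "E1 \<in> sets N1"
    using E1 unfolding E1_def .
  then have E1_Times: "E1 \<times> space M \<in> sets (N1 \<Otimes>\<^sub>M M)"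
    by simp
  have coupling_time_f: "coupling_time (\<lambda>t p. fst p t) (\<lambda>t p. snd p t) (f q) = coupling_time Xc Yc (fst q)"
    for q unfolding coupling_time_def f_def by simp
  have preimage_E: "f -` E \<inter> space C = E1 \<times> space M"
    by (auto simp: E_def E1_def N_def C_def space_pair_measure coupling_time_f)
  have "f -` E \<inter> space C \<in> sets C"
    unfolding preimage_E unfolding C_def using E1_Times by simp
  then have E: "E \<in> sets (final_algebra C f)"
    by (rule sets_final_algebraI)
  have "measure N E = measure C (E1 \<times> space M)"
    unfolding N_def measure_distr[OF measurable_final_algebra E] preimage_E ..
  also have "\<dots> = measure N1 E1"
    unfolding C_def measure_completion[OF E1_Times] by (rule measure_pair_measure_Times_space[OF M E1_sets])
  finally have P_E: "measure N E < e"
    using P_E1 by (simp add: E1_def)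
  have E_sets: "E \<in> sets N"
    using E unfolding N_def by simp
  have law_x: "same_law N (\<lambda>t p. fst p t) M (\<lambda>t \<omega>. x + (X t \<omega> + Y t \<omega>))"
    unfolding N_def C_def
    by (rule same_law_transport_add_independent[OF M N1 Ym indep law_Xc]) (simp add: f_def)
  have law_y: "same_law N (\<lambda>t p. snd p t) M (\<lambda>t \<omega>. y + (X t \<omega> + Y t \<omega>))"
    unfolding N_def C_def
    by (rule same_law_transport_add_independent[OF M N1 Ym indep law_Yc]) (simp add: f_def)
  show ?thesis
    using N law_x law_y cadlag_N E_sets P_E unfolding E_def by (rule good_coupling_existsI)
qed

theorem corollary3p4:
  assumes "levy_process M X"
    and "levy_process M Y"
    and "prob_space.indep_var M (PiM {0..} (\<lambda>_. borel)) (path_of X)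
                                (PiM {0..} (\<lambda>_. borel)) (path_of Y)"
    and "local_coupling_property M X"
  shows "local_coupling_property M (\<lambda>t \<omega>. X t \<omega> + Y t \<omega>)"
proof -
  have M: "prob_space M"
    using assms(1) unfolding levy_process_def by auto
  have Ym: "\<forall>t\<ge>0. Y t \<in> borel_measurable M" and Y_cadlag: "AE \<omega> in M. cadlag (\<lambda>t. Y t \<omega>)"
    using assms(2) unfolding levy_process_def by auto
  show ?thesis
    using assms(4)
    unfolding local_coupling_property_def
    by (metis good_coupling_exists_add_independent[OF M Ym Y_cadlag assms(3)])
qed

end
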